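(* Suppose that $F_k$ satisfies \begin{equation*} \begin{bmatrix} R^{-1} & F_k \\ F_k^T & -\alpha \big((A+BF_k)^T\tilde{P}+\tilde{P}(A+BF_k)\big)-Q \end{bmatrix} \succ 0. \end{equation*} Then the optimization problem of maximizing $\delta_k$ subject to the performance constraint holding for every $\xi \in [0,\delta_k]$, with the feedback gain fixed to $F_k$, is feasible (i.e., it admits a strictly positive $\delta_k$).
   Context: Consider the LTI system $\dot x(t)=Ax(t)+Bu(t)$, $x(0)=x_0$, with $(A,B)$ stabilizable, under the sample-and-hold law $u(t)=F_k x_k$, $x_k:=x(t_k)$, for $t\in[t_k,t_k+\delta_k)$. Let $Q\succ 0$, $R\succ 0$, let $\tilde F$ be a stabilizing feedback gain and $\tilde P\succ 0$ the unique solution of $(A+B\tilde F)^T\tilde P+\tilde P(A+B\tilde F)+Q+\tilde F^TR\tilde F=0$, and let $V(x)=x^T\tilde P x$ and $\alpha>1$. The cost-to-go is $J_k(F_k,\xi;x_k)=\int_{t_k}^{t_k+\xi}(x(t)^TQx(t)+u(t)^TRu(t))\,dt$. The performance constraint is $J_k(F_k,\xi;x_k)\le \alpha\big(V(x(t_k))-V(x(t_k+\xi))\big)$. The problem considered is: maximize $\delta_k$ subject to this constraint for every $\xi\in[0,\delta_k]$, with $F_k$ fixed. *)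

theory Defs
  imports "HOL-Analysis.Analysis"
begin

definition pos_def :: "real^'n^'n \<Rightarrow> bool" where
  "pos_def M \<longleftrightarrow> transpose M = M \<and> (\<forall>x. x \<noteq> 0 \<longrightarrow> x \<bullet> (M *v x) > 0)"

definition cmat :: "real^'n^'m \<Rightarrow> complex^'n^'m" where
  "cmat A = (\<chi> i j. complex_of_real (A $ i $ j))"

definition hurwitz :: "real^'n^'n \<Rightarrow> bool" where
  "hurwitz A \<longleftrightarrow> (\<forall>(e::complex) v. v \<noteq> 0 \<and> cmat A *v v = e *s v \<longrightarrow> Re e < 0)"

definition stabilizable :: "real^'n^'n \<Rightarrow> real^'m^'n \<Rightarrow> bool" where
  "stabilizable A B \<longleftrightarrow> (\<exists>K :: real^'n^'m. hurwitz (A + B ** K))"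

definition block_mat ::
  "real^'m^'m \<Rightarrow> real^'n^'m \<Rightarrow> real^'m^'n \<Rightarrow> real^'n^'n \<Rightarrow> real^('m + 'n)^('m + 'n)" where
  "block_mat M11 M12 M21 M22 = (\<chi> i j.
     (case i of Inl a \<Rightarrow> (case j of Inl b \<Rightarrow> M11 $ a $ b | Inr b \<Rightarrow> M12 $ a $ b)
              | Inr a \<Rightarrow> (case j of Inl b \<Rightarrow> M21 $ a $ b | Inr b \<Rightarrow> M22 $ a $ b)))"

end

(* Let m(xi) be the slack alpha (V(x_k) - V(x(t_k + xi))) - J_k(F_k, xi; x_k) of the performance
   constraint. Then m(0) = 0, and the right derivative of m at 0 is the quadratic form of the LMI
   matrix at the vector (-R F_k x_k, x_k). For x_k \<noteq> 0 this is positive, so m stays nonnegative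
   on a short interval [0, delta]. For x_k = 0 the input vanishes and x stays at 0 (a Gronwall
   argument), so the constraint holds with equality. *)
theory Submission
  imports Defs
begin

definition vec_stack :: "'a^'m \<Rightarrow> 'a^'n \<Rightarrow> 'a^('m + 'n)" where
  "vec_stack y z = (\<chi> i. case i of Inl a \<Rightarrow> y $ a | Inr b \<Rightarrow> z $ b)"

lemma vec_stack_eq_0_iff: "vec_stack y z = 0 \<longleftrightarrow> y = 0 \<and> z = 0"
  by (auto simp: vec_stack_def vec_eq_iff split: sum.split)

lemma sum_UNIV_sum_type:
  "sum g (UNIV :: ('a::finite + 'b::finite) set) = sum (g \<circ> Inl) UNIV + sum (g \<circ> Inr) UNIV"
  by (metis UNIV_Plus_UNIV finite sum.Plus)

lemma inner_block_mat:
  fixes y :: "real^'m" and z :: "real^'n"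
  shows "vec_stack y z \<bullet> (block_mat M11 M12 M21 M22 *v vec_stack y z)
     = y \<bullet> (M11 *v y) + y \<bullet> (M12 *v z) + z \<bullet> (M21 *v y) + z \<bullet> (M22 *v z)"
  unfolding inner_vec_def matrix_vector_mult_def block_mat_def vec_stack_def
  by (simp add: sum_UNIV_sum_type sum.distrib sum_distrib_left algebra_simps)

lemma inner_transpose_mult: "x \<bullet> (transpose M *v y) = (M *v x) \<bullet> (y::real^'n)"
  using dot_lmul_matrix[of y M x] by (simp add: inner_commute)

lemma matrix_vector_mult_uminus_right: "(M :: real^'n^'m) *v (- v) = - (M *v v)"
  by (simp add: matrix_vector_mult_def vec_eq_iff sum_negf)

lemma inner_lyapunov_form:
  fixes M P :: "real^'n^'n"
  shows "x \<bullet> ((transpose M ** P + P ** M) *v x) = (M *v x) \<bullet> (P *v x) + x \<bullet> (P *v (M *v x))"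
  by (simp only: matrix_vector_mult_add_rdistrib inner_add_right inner_transpose_mult
      flip: matrix_vector_mul_assoc)

lemma matrix_inv_left: "invertible A \<Longrightarrow> matrix_inv A ** A = mat 1"
  unfolding invertible_def matrix_inv_def by (rule someI2_ex) auto

lemma pos_def_invertible: "pos_def M \<Longrightarrow> invertible M"
  unfolding pos_def_def invertible_left_inverse matrix_left_invertible_ker
  by (metis inner_zero_right less_irrefl)

lemma pos_def_inner_pos: "pos_def M \<Longrightarrow> v \<noteq> 0 \<Longrightarrow> 0 < v \<bullet> (M *v v)"
  unfolding pos_def_def by blast

lemma quadratic_form_has_real_derivative:
  fixes P :: "real^'n^'n"
  assumes "(x has_vector_derivative v) (at t within S)"
  shows "((\<lambda>s. x s \<bullet> (P *v x s)) has_real_derivative (v \<bullet> (P *v x t) + x t \<bullet> (P *v v)))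
           (at t within S)"
proof -
  have dx: "(x has_derivative (\<lambda>h. h *\<^sub>R v)) (at t within S)"
    using assms by (simp add: has_vector_derivative_def)
  have "((\<lambda>s. x s \<bullet> (P *v x s)) has_derivative
          (\<lambda>h. x t \<bullet> (P *v (h *\<^sub>R v)) + (h *\<^sub>R v) \<bullet> (P *v x t))) (at t within S)"
    by (intro has_derivative_inner dx
        bounded_linear.has_derivative[OF matrix_vector_mul_bounded_linear])
  then show ?thesis
    unfolding has_field_derivative_def
    by (rule has_derivative_eq_rhs) (auto simp: matrix_vector_mult_scaleR algebra_simps)
qed

lemma continuous_on_atLeast_if_has_vector_derivative:
  assumes "\<And>t. t \<ge> a \<Longrightarrow> (x has_vector_derivative x' t) (at t within {a..})"
  shows "continuous_on {a..} x"
  unfolding continuous_on_eq_continuous_within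
  by (meson assms atLeast_iff has_vector_derivative_continuous)

lemma inner_le_if_norm_bound:
  fixes v :: "'a::real_inner"
  assumes "norm (f v) \<le> norm v * K"
  shows "v \<bullet> f v \<le> K * (v \<bullet> v)"
proof -
  have "v \<bullet> f v \<le> norm v * norm (f v)"
    by (rule norm_cauchy_schwarz)
  also have "\<dots> \<le> norm v * (norm v * K)"
    using assms by (simp add: mult_left_mono)
  also have "\<dots> = K * (v \<bullet> v)"
    by (simp add: dot_square_norm power2_eq_square)
  finally show ?thesis .
qed

lemma linear_ode_zero_if_initial_zero:
  fixes A :: "real^'n^'n"
  assumes der: "\<And>t. t \<ge> a \<Longrightarrow> (x has_vector_derivative (A *v x t)) (at t within {a..})"
    and x0: "x a = 0" and "a \<le> b"
  shows "x b = 0"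
proof -
  obtain K where K: "\<And>v. norm (A *v v) \<le> norm v * K"
    using bounded_linear.bounded[OF matrix_vector_mul_bounded_linear] by blast
  \<comment> \<open>Since \<open>x \<bullet> A x \<le> K |x|\<^sup>2\<close>, this weighted energy is nonincreasing.\<close>
  define w where "w t = exp (- 2 * K * t) * (x t \<bullet> x t)" for t
  define w' where "w' t = exp (- 2 * K * t) * (2 * (x t \<bullet> (A *v x t)) - 2 * K * (x t \<bullet> x t))" for t
  have "(w has_real_derivative w' t) (at t within {a..b})" if "a \<le> t" for t
  proof -
    have "((\<lambda>s. x s \<bullet> x s) has_real_derivative (A *v x t) \<bullet> x t + x t \<bullet> (A *v x t))
            (at t within {a..})"
      using quadratic_form_has_real_derivative[where P = "mat 1", OF der[OF that]] by simp
    then have "((\<lambda>s. x s \<bullet> x s) has_real_derivative 2 * (x t \<bullet> (A *v x t))) (at t within {a..})"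
      by (metis inner_commute mult_2)
    then have "(w has_real_derivative w' t) (at t within {a..})"
      unfolding w_def w'_def by (auto intro!: derivative_eq_intros simp: algebra_simps)
    then show ?thesis by (rule DERIV_subset) auto
  qed
  then obtain t where "t \<in> {a..b}" "w b - w a = w' t * (b - a)"
    using mvt_very_simple[OF \<open>a \<le> b\<close>, of w "\<lambda>t. (*) (w' t)"]
    by (auto simp: has_field_derivative_def)
  moreover have "x t \<bullet> (A *v x t) \<le> K * (x t \<bullet> x t)"
    using K by (rule inner_le_if_norm_bound)
  then have "w' t \<le> 0"
    by (simp add: w'_def mult_nonneg_nonpos)
  ultimately have "w b \<le> 0"
    using \<open>a \<le> b\<close> x0 by (simp add: w_def mult_nonpos_nonneg)
  then have "x b \<bullet> x b \<le> 0"
    by (simp add: w_def mult_le_0_iff)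
  then show ?thesis
    by (metis inner_eq_zero_iff inner_ge_zero order.antisym)
qed

lemma right_nondecreasing_if_pos_derivative:
  fixes h :: "real \<Rightarrow> real"
  assumes "(h has_real_derivative l) (at a within {a..b})" "0 < l" "a < b"
  shows "\<exists>\<delta>>0. \<forall>\<xi>\<in>{0..\<delta>}. h a \<le> h (a + \<xi>)"
proof -
  obtain d where "d > 0" and d: "\<And>\<xi>. 0 < \<xi> \<Longrightarrow> a + \<xi> \<in> {a..b} \<Longrightarrow> \<xi> < d \<Longrightarrow> h a < h (a + \<xi>)"
    using has_real_derivative_pos_inc_right[OF assms(1,2)] by blast
  show ?thesis
  proof (intro exI[of _ "min (d/2) (b - a)"] conjI ballI)
    fix \<xi> assume "\<xi> \<in> {0..min (d/2) (b - a)}"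
    with \<open>d > 0\<close> d[of \<xi>] show "h a \<le> h (a + \<xi>)"
      by (cases "\<xi> = 0") auto
  qed (use \<open>d > 0\<close> \<open>a < b\<close> in auto)
qed

lemma inner_block_mat_feedback:
  fixes R :: "real^'m^'m" and F :: "real^'n^'m" and x :: "real^'n"
  assumes "transpose R = R" "invertible R"
  shows "vec_stack (- (R *v (F *v x))) x
           \<bullet> (block_mat (matrix_inv R) F (transpose F) M *v vec_stack (- (R *v (F *v x))) x)
         = x \<bullet> (M *v x) - (F *v x) \<bullet> (R *v (F *v x))"
proof -
  define u where "u = F *v x"
  have R_sym: "(R *v u) \<bullet> u = u \<bullet> (R *v u)"
    using inner_transpose_mult[of u R u] assms(1) by (simp add: inner_commute)
  have "matrix_inv R *v (R *v u) = u"
    by (simp add: matrix_vector_mul_assoc matrix_inv_left assms(2))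
  moreover have "x \<bullet> (transpose F *v y) = u \<bullet> y" for y
    by (simp only: inner_transpose_mult u_def)
  ultimately show ?thesis
    unfolding inner_block_mat u_def[symmetric]
    by (simp add: matrix_vector_mult_uminus_right R_sym inner_commute[of _ u])
qed

lemma inner_performance_lmi:
  fixes A :: "real^'n^'n" and B :: "real^'m^'n" and F :: "real^'n^'m" and R :: "real^'m^'m"
    and x :: "real^'n"
  assumes "pos_def R"
  defines "u \<equiv> F *v x"
  shows "vec_stack (- (R *v u)) x \<bullet> (block_mat (matrix_inv R) F (transpose F)
             (- \<alpha> *\<^sub>R (transpose (A + B ** F) ** P + P ** (A + B ** F)) - Q) *v vec_stack (- (R *v u)) x)
         = - \<alpha> * ((A *v x + B *v u) \<bullet> (P *v x) + x \<bullet> (P *v (A *v x + B *v u)))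
           - (x \<bullet> (Q *v x) + u \<bullet> (R *v u))"
proof -
  have "(A + B ** F) *v x = A *v x + B *v u"
    by (simp add: u_def matrix_vector_mult_add_rdistrib matrix_vector_mul_assoc)
  then have "x \<bullet> ((- \<alpha> *\<^sub>R (transpose (A + B ** F) ** P + P ** (A + B ** F)) - Q) *v x)
      = - \<alpha> * ((A *v x + B *v u) \<bullet> (P *v x) + x \<bullet> (P *v (A *v x + B *v u))) - x \<bullet> (Q *v x)"
    by (simp only: matrix_vector_mult_diff_rdistrib inner_diff_right inner_lyapunov_form
        inner_scaleR_right flip: scaleR_matrix_vector_assoc)
  moreover have "transpose R = R" "invertible R"
    using assms(1) by (simp_all add: pos_def_def pos_def_invertible)
  ultimately show ?thesis
    by (simp add: inner_block_mat_feedback u_def)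
qed

lemma performance_margin_has_real_derivative:
  fixes P Q :: "real^'n^'n" and x :: "real \<Rightarrow> real^'n"
  assumes der: "\<And>t. t \<ge> a \<Longrightarrow> (x has_vector_derivative x' t) (at t within {a..})"
    and "a \<le> b"
  shows "((\<lambda>t. \<alpha> * (x a \<bullet> (P *v x a) - x t \<bullet> (P *v x t))
                 - integral {a..t} (\<lambda>s. x s \<bullet> (Q *v x s) + c))
          has_real_derivative
            - \<alpha> * (x' a \<bullet> (P *v x a) + x a \<bullet> (P *v x' a)) - (x a \<bullet> (Q *v x a) + c))
         (at a within {a..b})"
proof -
  have "continuous_on {a..b} x"
    using continuous_on_atLeast_if_has_vector_derivative[OF der] continuous_on_subset by fastforce
  then have "continuous_on {a..b} (\<lambda>s. x s \<bullet> (Q *v x s) + c)"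
    by (intro continuous_intros
        bounded_linear.continuous_on[OF matrix_vector_mul_bounded_linear])
  then have "((\<lambda>t. integral {a..t} (\<lambda>s. x s \<bullet> (Q *v x s) + c)) has_real_derivative
               x a \<bullet> (Q *v x a) + c) (at a within {a..b})"
    using \<open>a \<le> b\<close> by (intro integral_has_real_derivative) auto
  moreover have "((\<lambda>t. x t \<bullet> (P *v x t)) has_real_derivative
                   x' a \<bullet> (P *v x a) + x a \<bullet> (P *v x' a)) (at a within {a..b})"
    using quadratic_form_has_real_derivative[OF der] by (rule DERIV_subset) auto
  ultimately show ?thesis
    by (auto intro!: derivative_eq_intros simp: algebra_simps)
qed

theorem proposition2:
  fixes A :: "real^'n^'n" and B :: "real^'m^'n"
    and Q :: "real^'n^'n" and R :: "real^'m^'m"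
    and Ft :: "real^'n^'m" and Pt :: "real^'n^'n"
    and Fk :: "real^'n^'m" and \<alpha> :: real
    and x :: "real \<Rightarrow> real^'n" and tk :: real
  assumes stab: "stabilizable A B"
    and Q_pd: "pos_def Q" and R_pd: "pos_def R"
    and Ft_stab: "hurwitz (A + B ** Ft)"
    and Pt_lyap: "transpose (A + B ** Ft) ** Pt + Pt ** (A + B ** Ft) + Q
                    + transpose Ft ** R ** Ft = 0"
    and Pt_unique: "\<And>P. transpose (A + B ** Ft) ** P + P ** (A + B ** Ft) + Q
                    + transpose Ft ** R ** Ft = 0 \<Longrightarrow> P = Pt"
    and Pt_pd: "pos_def Pt"
    and alpha: "\<alpha> > 1"
    and traj: "\<And>t. t \<ge> tk \<Longrightarrow>
         (x has_vector_derivative (A *v x t + B *v (Fk *v x tk))) (at t within {tk..})"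
    and LMI: "pos_def (block_mat (matrix_inv R) Fk (transpose Fk)
               (- \<alpha> *\<^sub>R (transpose (A + B ** Fk) ** Pt + Pt ** (A + B ** Fk)) - Q))"
  shows "\<exists>\<delta>>0. \<forall>\<xi>\<in>{0..\<delta>}.
           integral {tk..tk + \<xi>}
             (\<lambda>t. x t \<bullet> (Q *v x t) + (Fk *v x tk) \<bullet> (R *v (Fk *v x tk)))
           \<le> \<alpha> * (x tk \<bullet> (Pt *v x tk) - x (tk + \<xi>) \<bullet> (Pt *v x (tk + \<xi>)))"
proof (cases "x tk = 0")
  case True
  then have zero: "x t = 0" if "t \<ge> tk" for t
    using linear_ode_zero_if_initial_zero[of tk x A t] traj that by simp
  then have "integral {tk..tk + \<xi>} (\<lambda>t. x t \<bullet> (Q *v x t)) = integral {tk..tk + \<xi>} (\<lambda>_. 0)"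
    for \<xi>
    by (intro integral_cong) simp
  then show ?thesis
    using True zero by (intro exI[of _ 1]) auto
next
  case False
  define u where "u = Fk *v x tk"
  define l where "l = - \<alpha> * ((A *v x tk + B *v u) \<bullet> (Pt *v x tk) + x tk \<bullet> (Pt *v (A *v x tk + B *v u)))
                      - (x tk \<bullet> (Q *v x tk) + u \<bullet> (R *v u))"
  have "0 < l"
    using pos_def_inner_pos[OF LMI, of "vec_stack (- (R *v u)) (x tk)"] False
    unfolding u_def l_def inner_performance_lmi[OF R_pd] by (simp add: vec_stack_eq_0_iff)
  moreover have "((\<lambda>t. \<alpha> * (x tk \<bullet> (Pt *v x tk) - x t \<bullet> (Pt *v x t))
                 - integral {tk..t} (\<lambda>s. x s \<bullet> (Q *v x s) + u \<bullet> (R *v u)))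
               has_real_derivative l) (at tk within {tk..tk + 1})"
    unfolding l_def using traj u_def by (intro performance_margin_has_real_derivative) auto
  ultimately obtain \<delta> where "\<delta> > 0" and "\<forall>\<xi>\<in>{0..\<delta>}. 0 \<le>
      \<alpha> * (x tk \<bullet> (Pt *v x tk) - x (tk + \<xi>) \<bullet> (Pt *v x (tk + \<xi>)))
        - integral {tk..tk + \<xi>} (\<lambda>s. x s \<bullet> (Q *v x s) + u \<bullet> (R *v u))"
    using right_nondecreasing_if_pos_derivative[where a = tk and b = "tk + 1"] by fastforce
  then show ?thesis
    unfolding u_def by (intro exI[of _ \<delta>]) auto
qed

end
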